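(* Let ${\bf a}=(a_1,\ldots,a_r)$ be a tuple of positive integers with $r\geq 2$. Then \[\deg({\bf B}:\mathcal W_{\bf a}\to\mathcal W_{\bf a})=\prod_{j=1}^{r-1}\left(\frac{2a_j}{a_{j+1}+a_{j+2}+\cdots+a_r+1}+1\right).\]
   Context: For finite sets $X,Y$ and $f:X\to Y$, $\deg(f)=\frac{1}{|X|}\sum_{y\in Y}|f^{-1}(y)|^2$. $\mathcal W_{\bf a}$ is the set of all words over the alphabet $\{1,\dots,r\}$ containing exactly $a_i$ copies of the letter $i$ for each $i$. For a word $w=w_1\cdots w_\ell$ and $i\in\{1,\dots,\ell-1\}$, $t_i(w)$ is obtained by swapping $w_i$ and $w_{i+1}$ if $w_i>w_{i+1}$, and $t_i(w)=w$ if $w_i\leq w_{i+1}$. Bubble sort is ${\bf B}(w)=t_{\ell-1}\circ t_{\ell-2}\circ\cdots\circ t_1(w)$, viewed as a map $\mathcal W_{\bf a}\to\mathcal W_{\bf a}$. *)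

theory Defs
  imports Complex_Main
begin

definition fdeg :: "'a set \<Rightarrow> 'b set \<Rightarrow> ('a \<Rightarrow> 'b) \<Rightarrow> real" where
  "fdeg X Y f = (1 / real (card X)) * (\<Sum>y\<in>Y. real (card {x\<in>X. f x = y}) ^ 2)"

(* W_a: words over {1..r} (r = length a) with exactly a_i copies of letter i.
   a_i is  a ! (i - 1)  (lists are 0-indexed). *)
definition words :: "nat list \<Rightarrow> nat list set" where
  "words a = {w. set w \<subseteq> {1..length a} \<and>
                 (\<forall>i\<in>{1..length a}. count_list w i = a ! (i - 1))}"

(* t_i with 1-based position i: swap w_i and w_{i+1} if w_i > w_{i+1} *)
definition tswap :: "nat \<Rightarrow> nat list \<Rightarrow> nat list" where
  "tswap i w = (if w ! (i - 1) > w ! i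
                then w[i - 1 := w ! i, i := w ! (i - 1)] else w)"

definition bubble :: "nat list \<Rightarrow> nat list" where
  "bubble w = fold tswap [1..<length w] w"

end

theory Submission
  imports Defs "HOL-Combinatorics.Multiset_Permutations"
begin

(* The degree of f : X \<rightarrow> X is the number of pairs (x, y) with f x = f y divided by |X|;
   in this form it is invariant under conjugation by a bijection and multiplicative for
   product maps f \<times> g.

   Record a word w \<in> W_(a_1,...,a_r) by its mask (which positions carry a letter > 1), a binary
   word with a_1 zeros and m = a_2 + ... + a_r ones, together with the word in
   W_(a_2,...,a_r) obtained by deleting the 1s and decrementing the other letters. This is a
   bijection, and one pass of bubble sort commutes with it, because a pass commutes with
   monotone relabellings of the letters and with deleting all letters below a threshold.
   Hence deg B on W_a is deg B on binary words with a_1 zeros and m ones, times deg B on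
   W_(a_2,...,a_r).

   On binary words with s zeros and m > 0 ones, a pass moves the first 1 to the end.
   Sorting the pairs (x, y) with B x = B y by their first letters gives
   K(s+1, m) = K(s, m) + N(s+1, m-1) + 2 N(s, m) for the number K of such pairs and the
   number N of words, and with the usual relations between the multinomial counts N this
   yields K(s, m) = N(s, m) (2s/(m+1) + 1). *)

section \<open>Degree via kernel pairs\<close>

definition kernel_pairs :: "'a set \<Rightarrow> ('a \<Rightarrow> 'b) \<Rightarrow> ('a \<times> 'a) set" where
  "kernel_pairs X f = {(x, y) \<in> X \<times> X. f x = f y}"

lemma kernel_pairsI: "x \<in> X \<Longrightarrow> y \<in> X \<Longrightarrow> f x = f y \<Longrightarrow> (x, y) \<in> kernel_pairs X f"
  by (simp add: kernel_pairs_def)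

lemma finite_kernel_pairs: "finite X \<Longrightarrow> finite (kernel_pairs X f)"
  by (rule finite_subset[of _ "X \<times> X"]) (auto simp: kernel_pairs_def)

lemma fdeg_eq_card_kernel_pairs:
  assumes "finite Y" and "f ` X \<subseteq> Y"
  shows "fdeg X Y f = card (kernel_pairs X f) / card X"
proof (cases "finite X")
  case True
  let ?F = "\<lambda>y. {x \<in> X. f x = y}"
  have "kernel_pairs X f = (\<Union>y\<in>Y. ?F y \<times> ?F y)"
    using assms(2) by (auto simp: kernel_pairs_def)
  also have "card \<dots> = (\<Sum>y\<in>Y. card (?F y \<times> ?F y))"
    by (rule card_UN_disjoint) (use assms(1) True in auto)
  finally have "real (card (kernel_pairs X f)) = (\<Sum>y\<in>Y. real (card (?F y)) ^ 2)"
    by (simp add: card_cartesian_product power2_eq_square)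
  then show ?thesis
    by (simp add: fdeg_def)
qed (simp add: fdeg_def)

lemma card_kernel_pairs_conjugate:
  assumes \<phi>: "bij_betw \<phi> X X'" and "f ` X \<subseteq> X"
    and comm: "\<And>x. x \<in> X \<Longrightarrow> \<phi> (f x) = f' (\<phi> x)"
  shows "card (kernel_pairs X' f') = card (kernel_pairs X f)"
proof -
  have inj: "inj_on \<phi> X" and X': "X' = \<phi> ` X"
    using \<phi> by (auto simp: bij_betw_def)
  have "f x = f y \<longleftrightarrow> f' (\<phi> x) = f' (\<phi> y)" if "x \<in> X" "y \<in> X" for x y
  proof -
    have "f x \<in> X" "f y \<in> X"
      using that assms(2) by auto
    then show ?thesis
      using that inj_on_eq_iff[OF inj] by (simp flip: comm)
  qed
  then have "kernel_pairs X' f' = map_prod \<phi> \<phi> ` kernel_pairs X f"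
    unfolding X' kernel_pairs_def by auto
  moreover have "inj_on (map_prod \<phi> \<phi>) (kernel_pairs X f)"
    using inj by (auto simp: kernel_pairs_def inj_on_def)
  ultimately show ?thesis
    by (simp add: card_image)
qed

lemma card_kernel_pairs_map_prod:
  "card (kernel_pairs (Y \<times> Z) (map_prod g h)) = card (kernel_pairs Y g) * card (kernel_pairs Z h)"
proof -
  let ?swap = "\<lambda>((y, y'), (z, z')). ((y, z), (y', z'))"
  have "kernel_pairs (Y \<times> Z) (map_prod g h) = ?swap ` (kernel_pairs Y g \<times> kernel_pairs Z h)"
    by (force simp: kernel_pairs_def)
  moreover have "inj_on ?swap (kernel_pairs Y g \<times> kernel_pairs Z h)"
    by (auto simp: inj_on_def)
  ultimately show ?thesis
    by (simp add: card_image card_cartesian_product)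
qed

lemma fdeg_conjugate:
  assumes "finite X" and \<phi>: "bij_betw \<phi> X X'" and f: "f ` X \<subseteq> X"
    and comm: "\<And>x. x \<in> X \<Longrightarrow> \<phi> (f x) = f' (\<phi> x)"
  shows "fdeg X' X' f' = fdeg X X f"
proof -
  have "f' ` X' \<subseteq> X'"
    using \<phi> f by (auto simp: bij_betw_def simp flip: comm)
  moreover have "finite X'" "card X' = card X"
    using \<phi> \<open>finite X\<close> by (auto simp: bij_betw_finite bij_betw_same_card)
  ultimately show ?thesis
    using assms by (simp add: fdeg_eq_card_kernel_pairs card_kernel_pairs_conjugate)
qed

lemma fdeg_map_prod:
  assumes "finite Y" "finite Z" "g ` Y \<subseteq> Y" "h ` Z \<subseteq> Z"
  shows "fdeg (Y \<times> Z) (Y \<times> Z) (map_prod g h) = fdeg Y Y g * fdeg Z Z h"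
proof -
  have "map_prod g h ` (Y \<times> Z) \<subseteq> Y \<times> Z"
    using assms by auto
  then show ?thesis
    using assms
    by (simp add: fdeg_eq_card_kernel_pairs card_kernel_pairs_map_prod card_cartesian_product)
qed

lemma fdeg_singleton:
  assumes "f x = x"
  shows "fdeg {x} {x} f = 1"
proof -
  have "{y \<in> {x}. f y = x} = {x}"
    using assms by auto
  then show ?thesis
    by (simp add: fdeg_def)
qed

section \<open>One pass of bubble sort\<close>

fun bubble_pass :: "'a::linorder list \<Rightarrow> 'a list" where
  "bubble_pass [] = []"
| "bubble_pass [x] = [x]"
| "bubble_pass (x # y # r) =
     (if y < x then y # bubble_pass (x # r) else x # bubble_pass (y # r))"

lemma tswap_Suc_Cons: "0 < i \<Longrightarrow> tswap (Suc i) (z # v) = z # tswap i v"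
  by (cases i) (auto simp: tswap_def)

lemma fold_tswap_map_Suc_Cons:
  "0 \<notin> set is \<Longrightarrow> fold tswap (map Suc is) (z # v) = z # fold tswap is v"
  by (induction "is" arbitrary: v) (auto simp: tswap_Suc_Cons)

lemma bubble_Cons_Cons:
  "bubble (x # y # r) = (if y < x then y # bubble (x # r) else x # bubble (y # r))"
proof -
  have "[1..<length (x # y # r)] = 1 # map Suc [1..<length (y # r)]"
    by (simp add: upt_conv_Cons map_Suc_upt del: upt_Suc)
  then have "bubble (x # y # r) =
      fold tswap (map Suc [1..<length (y # r)]) (tswap 1 (x # y # r))"
    by (simp add: bubble_def del: upt_Suc)
  moreover have "tswap 1 (x # y # r) = (if y < x then y # x # r else x # y # r)"
    by (auto simp: tswap_def)
  ultimately show ?thesis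
    by (simp add: bubble_def fold_tswap_map_Suc_Cons del: upt_Suc)
qed

lemma bubble_eq_bubble_pass: "bubble w = bubble_pass w"
proof (induction w rule: bubble_pass.induct)
  case (3 x y r)
  then show ?case
    by (simp add: bubble_Cons_Cons)
qed (simp_all add: bubble_def)

lemma mset_bubble_pass [simp]: "mset (bubble_pass w) = mset w"
  by (induction w rule: bubble_pass.induct) auto

lemma length_bubble_pass [simp]: "length (bubble_pass w) = length w"
  by (metis mset_bubble_pass size_mset)

lemma bubble_pass_image_permutations_of_multiset:
  "bubble_pass ` permutations_of_multiset A \<subseteq> permutations_of_multiset A"
  by (auto simp: permutations_of_multiset_def)

lemma bubble_pass_Cons_Cons: "bubble_pass (x # y # r) = min x y # bubble_pass (max x y # r)"
  by (auto simp: min_def max_def)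

lemma last_bubble_pass: "w \<noteq> [] \<Longrightarrow> last (bubble_pass w) = Max (set w)"
proof (induction w rule: bubble_pass.induct)
  case (3 x y r)
  have "bubble_pass (max x y # r) \<noteq> []"
    by (metis length_bubble_pass length_0_conv list.discI)
  moreover have "last (bubble_pass (max x y # r)) = Max (set (max x y # r))"
    using 3 by (cases "y < x") (auto simp: max_def)
  moreover have "Max (set (x # y # r)) = Max (set (max x y # r))"
    by (cases r) (simp_all add: max.assoc)
  ultimately show ?case
    by (simp add: bubble_pass_Cons_Cons del: bubble_pass.simps)
qed simp_all

lemma bubble_pass_map_mono:
  assumes "mono g"
  shows "bubble_pass (map g w) = map g (bubble_pass w)"
proof (induction w rule: bubble_pass.induct)
  case (3 x y r)
  then show ?case
    using monoD[OF assms, of x y] monoD[OF assms, of y x]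
    by (auto simp: not_less order.strict_iff_order)
qed auto

lemma bubble_pass_filter_upward_closed:
  assumes "\<And>x y. P x \<Longrightarrow> x \<le> y \<Longrightarrow> P y"
  shows "bubble_pass (filter P w) = filter P (bubble_pass w)"
proof (induction w rule: bubble_pass.induct)
  case (3 x y r)
  then show ?case
    using assms[of y x] assms[of x y] by (cases "y < x") (auto simp: less_imp_le)
qed auto

lemma bubble_pass_False_Cons: "bubble_pass (False # v) = False # bubble_pass v"
  by (cases v) auto

lemma bubble_pass_True_Cons: "bubble_pass (True # v) = v @ [True]"
  by (induction v) (auto simp: bubble_pass_False_Cons)

lemma bubble_pass_False_Cons_eq_True_Cons_iff:
  assumes "True \<in> set v"
  shows "bubble_pass (False # v) = bubble_pass (True # v') \<longleftrightarrow>
    v' = butlast (False # bubble_pass v)"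
proof -
  have "v \<noteq> []"
    using assms by auto
  moreover have "bubble_pass v \<noteq> []"
    using assms by (metis length_bubble_pass length_0_conv empty_iff list.set(1))
  moreover have "Max (set v) = True"
    using assms by (intro Max_eqI) auto
  ultimately have "last (False # bubble_pass v) = True"
    by (simp add: last_bubble_pass)
  then have "False # bubble_pass v = butlast (False # bubble_pass v) @ [True]"
    by (metis append_butlast_last_id list.distinct(1))
  then show ?thesis
    by (auto simp: bubble_pass_False_Cons bubble_pass_True_Cons)
qed

section \<open>Splitting off the smallest letter\<close>

fun letter_mset :: "nat list \<Rightarrow> nat multiset" where
  "letter_mset [] = {#}"
| "letter_mset (s # a) = replicate_mset s 1 + image_mset Suc (letter_mset a)"

lemma count_image_mset_Suc:
  "count (image_mset Suc A) x = (case x of 0 \<Rightarrow> 0 | Suc y \<Rightarrow> count A y)"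
  by (induction A) (auto split: nat.split)

lemma count_letter_mset:
  "count (letter_mset a) x = (if 1 \<le> x \<and> x \<le> length a then a ! (x - 1) else 0)"
proof (induction a arbitrary: x)
  case (Cons s a)
  then show ?case
    by (cases x) (auto simp: count_image_mset_Suc nth_Cons')
qed simp

lemma size_letter_mset: "size (letter_mset a) = sum_list a"
  by (induction a) auto

lemma zero_not_in_letter_mset: "0 \<notin># letter_mset a"
  by (induction a) auto

lemma words_eq_permutations_of_multiset: "words a = permutations_of_multiset (letter_mset a)"
proof -
  have "w \<in> words a \<longleftrightarrow> (\<forall>x. count_list w x = count (letter_mset a) x)" for w
  proof
    assume count: "\<forall>x. count_list w x = count (letter_mset a) x"
    have "t \<in> {1..length a}" if "t \<in> set w" for t
      using that count[rule_format, of t] count_list_0_iff[of w t]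
      by (auto simp: count_letter_mset split: if_splits)
    then show "w \<in> words a"
      using count by (auto simp: words_def count_letter_mset)
  qed (auto simp: words_def count_letter_mset count_list_0_iff)
  then show ?thesis
    by (auto simp: permutations_of_multiset_def multiset_eq_iff count_mset)
qed

lemma mem_words_iff: "w \<in> words a \<longleftrightarrow> mset w = letter_mset a"
  by (simp add: words_eq_permutations_of_multiset permutations_of_multiset_def)

lemma zero_not_in_word: "w \<in> words a \<Longrightarrow> 0 \<notin> set w"
  using zero_not_in_letter_mset[of a] by (simp add: mem_words_iff flip: set_mset_mset)

lemma finite_words: "finite (words a)"
  by (simp add: words_eq_permutations_of_multiset)

lemma bubble_pass_image_words: "bubble_pass ` words a \<subseteq> words a"
  unfolding words_eq_permutations_of_multiset by (rule bubble_pass_image_permutations_of_multiset)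

definition bool_words :: "nat \<Rightarrow> nat \<Rightarrow> bool list set" where
  "bool_words s m = permutations_of_multiset (replicate_mset s False + replicate_mset m True)"

lemma mem_bool_words_iff:
  "x \<in> bool_words s m \<longleftrightarrow> count_list x False = s \<and> count_list x True = m"
  by (auto simp: bool_words_def permutations_of_multiset_def multiset_eq_iff count_mset
      all_bool_eq)

lemma finite_bool_words: "finite (bool_words s m)"
  by (simp add: bool_words_def)

lemma bubble_pass_image_bool_words: "bubble_pass ` bool_words s m \<subseteq> bool_words s m"
  unfolding bool_words_def by (rule bubble_pass_image_permutations_of_multiset)

definition split_word :: "nat list \<Rightarrow> bool list \<times> nat list" where
  "split_word w = (map (\<lambda>x. 1 < x) w, map (\<lambda>x. x - 1) (filter (\<lambda>x. 1 < x) w))"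

fun merge_word :: "bool list \<times> nat list \<Rightarrow> nat list" where
  "merge_word ([], u) = []"
| "merge_word (False # m, u) = 1 # merge_word (m, u)"
| "merge_word (True # m, u) = Suc (hd u) # merge_word (m, tl u)"

lemma merge_split_word: "0 \<notin> set w \<Longrightarrow> merge_word (split_word w) = w"
proof (induction w)
  case (Cons x w)
  then show ?case
    by (cases "1 < x") (auto simp: split_word_def)
qed (simp add: split_word_def)

lemma split_merge_word:
  "count_list m True = length u \<Longrightarrow> 0 \<notin> set u \<Longrightarrow> split_word (merge_word (m, u)) = (m, u)"
proof (induction m arbitrary: u)
  case (Cons b m)
  then show ?case
    by (cases b; cases u) (auto simp: split_word_def)
qed (simp add: split_word_def)

lemma mset_merge_word:
  "count_list m True = length u \<Longrightarrow>
     mset (merge_word (m, u)) = replicate_mset (count_list m False) 1 + image_mset Suc (mset u)"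
proof (induction m arbitrary: u)
  case (Cons b m)
  then show ?case
    by (cases b; cases u) auto
qed simp

lemma split_word_mem:
  assumes "w \<in> words (s # a)"
  shows "split_word w \<in> bool_words s (sum_list a) \<times> words a"
proof -
  let ?L = "letter_mset a"
  have w: "mset w = replicate_mset s 1 + image_mset Suc ?L"
    using assms by (simp add: mem_words_iff)
  have pos: "\<And>x. x \<in># ?L \<Longrightarrow> 0 < x"
    using zero_not_in_letter_mset[of a] by (metis gr0I)
  have "image_mset (\<lambda>x. 1 < x) (image_mset Suc ?L) = image_mset (\<lambda>_. True) ?L"
    by (simp add: image_mset.compositionality comp_def pos cong: image_mset_cong)
  then have "mset (fst (split_word w)) = replicate_mset s False + replicate_mset (sum_list a) True"
    by (simp add: split_word_def w image_mset_const_eq size_letter_mset)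
  moreover have "filter_mset (\<lambda>x. 1 < x) (replicate_mset s (1::nat)) = {#}"
    by (induction s) auto
  moreover have "filter_mset (\<lambda>x. 1 < Suc x) ?L = ?L"
    using pos by (simp add: filter_mset_eq_conv)
  then have "filter_mset (\<lambda>x. 1 < x) (image_mset Suc ?L) = image_mset Suc ?L"
    by (simp add: filter_mset_image_mset)
  ultimately show ?thesis
    by (simp add: split_word_def w image_mset.compositionality comp_def
        bool_words_def permutations_of_multiset_def mem_words_iff)
qed

lemma merge_word_mem:
  assumes "(m, u) \<in> bool_words s (sum_list a) \<times> words a"
  shows "merge_word (m, u) \<in> words (s # a)"
proof -
  have "mset u = letter_mset a"
    using assms by (simp add: mem_words_iff)
  moreover have "count_list m True = length u" "count_list m False = s"
    using assms
    by (simp_all add: mem_bool_words_iff mem_words_iff size_letter_mset flip: size_mset)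
  ultimately show ?thesis
    by (simp add: mem_words_iff mset_merge_word)
qed

lemma bij_betw_split_word:
  "bij_betw split_word (words (s # a)) (bool_words s (sum_list a) \<times> words a)"
proof (rule bij_betw_byWitness[where f' = merge_word])
  show "\<forall>w \<in> words (s # a). merge_word (split_word w) = w"
    by (simp add: merge_split_word zero_not_in_word)
  show "\<forall>p \<in> bool_words s (sum_list a) \<times> words a. split_word (merge_word p) = p"
  proof safe
    fix m u assume "m \<in> bool_words s (sum_list a)" "u \<in> words a"
    then show "split_word (merge_word (m, u)) = (m, u)"
      by (intro split_merge_word)
        (auto simp: mem_bool_words_iff mem_words_iff size_letter_mset zero_not_in_word
          simp flip: size_mset)
  qed
qed (auto simp: image_subset_iff split_word_mem merge_word_mem)

lemma split_word_bubble_pass: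
  "split_word (bubble_pass w) = map_prod bubble_pass bubble_pass (split_word w)"
proof -
  have "mono (\<lambda>x::nat. 1 < x)" "mono (\<lambda>x::nat. x - 1)"
    by (auto simp: mono_def)
  then show ?thesis
    by (simp add: split_word_def bubble_pass_map_mono bubble_pass_filter_upward_closed)
qed

lemma fdeg_words_Cons:
  "fdeg (words (s # a)) (words (s # a)) bubble_pass =
    fdeg (bool_words s (sum_list a)) (bool_words s (sum_list a)) bubble_pass
      * fdeg (words a) (words a) bubble_pass"
proof -
  have "fdeg (words (s # a)) (words (s # a)) bubble_pass =
      fdeg (bool_words s (sum_list a) \<times> words a) (bool_words s (sum_list a) \<times> words a)
        (map_prod bubble_pass bubble_pass)"
    by (rule fdeg_conjugate[OF finite_words bij_betw_split_word bubble_pass_image_words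
          split_word_bubble_pass, symmetric])
  also have "\<dots> = fdeg (bool_words s (sum_list a)) (bool_words s (sum_list a)) bubble_pass
      * fdeg (words a) (words a) bubble_pass"
    by (rule fdeg_map_prod[OF finite_bool_words finite_words bubble_pass_image_bool_words
          bubble_pass_image_words])
  finally show ?thesis .
qed

section \<open>Binary words\<close>

lemma card_bool_words_pos: "0 < card (bool_words s m)"
  by (simp add: bool_words_def card_gt_0_iff)

lemma card_bool_words_Suc_False:
  "Suc s * card (bool_words (Suc s) m) = (Suc s + m) * card (bool_words s m)"
  using card_permutations_of_multiset_remove_aux[of False
      "replicate_mset (Suc s) False + replicate_mset m True"]
  by (simp add: bool_words_def algebra_simps)

lemma card_bool_words_Suc_True:
  "Suc m * card (bool_words s (Suc m)) = (s + Suc m) * card (bool_words s m)"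
  using card_permutations_of_multiset_remove_aux[of True
      "replicate_mset s False + replicate_mset (Suc m) True"]
  by (simp add: bool_words_def algebra_simps)

lemma permutations_of_multiset_replicate_mset:
  "permutations_of_multiset (replicate_mset n x) = {replicate n x}"
proof (intro set_eqI iffI)
  fix xs assume "xs \<in> permutations_of_multiset (replicate_mset n x)"
  then have "mset xs = replicate_mset n x"
    by (simp add: permutations_of_multiset_def)
  then show "xs \<in> {replicate n x}"
    by (metis set_mset_mset size_mset size_replicate_mset in_replicate_mset replicate_eqI
        singletonI)
qed (simp add: permutations_of_multiset_def)

lemma Cons_mem_bool_words_iff [simp]:
  "False # v \<in> bool_words s m \<longleftrightarrow> 0 < s \<and> v \<in> bool_words (s - 1) m"
  "True # v \<in> bool_words s m \<longleftrightarrow> 0 < m \<and> v \<in> bool_words s (m - 1)"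
  by (auto simp: mem_bool_words_iff)

lemma bubble_pass_eq_imp_mem_bool_words_iff:
  "bubble_pass x = bubble_pass y \<Longrightarrow> x \<in> bool_words s m \<longleftrightarrow> y \<in> bool_words s m"
  unfolding bool_words_def permutations_of_multiset_def by (metis mem_Collect_eq mset_bubble_pass)

lemma True_in_set_if_mem_bool_words: "v \<in> bool_words s m \<Longrightarrow> 0 < m \<Longrightarrow> True \<in> set v"
  using count_list_0_iff[of v True] by (auto simp: mem_bool_words_iff)

lemma kernel_pairs_bool_words_Suc_subset:
  assumes "0 < m"
  shows "kernel_pairs (bool_words (Suc s) m) bubble_pass \<subseteq>
      map_prod (Cons False) (Cons False) ` kernel_pairs (bool_words s m) bubble_pass
    \<union> (\<lambda>v. (True # v, True # v)) ` bool_words (Suc s) (m - 1)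
    \<union> (\<lambda>v. (False # v, True # butlast (False # bubble_pass v))) ` bool_words s m
    \<union> (\<lambda>v. (True # butlast (False # bubble_pass v), False # v)) ` bool_words s m"
  (is "_ \<subseteq> ?FF \<union> ?TT \<union> ?FT \<union> ?TF")
proof
  fix p assume "p \<in> kernel_pairs (bool_words (Suc s) m) bubble_pass"
  then obtain x y where p: "p = (x, y)" and xy: "bubble_pass x = bubble_pass y"
    and x: "x \<in> bool_words (Suc s) m" and y: "y \<in> bool_words (Suc s) m"
    by (auto simp: kernel_pairs_def)
  have "x \<noteq> []" "y \<noteq> []"
    using x y by (auto simp: mem_bool_words_iff)
  then obtain b v c v' where bv: "x = b # v" and cv: "y = c # v'"
    by (meson neq_Nil_conv)
  show "p \<in> ?FF \<union> ?TT \<union> ?FT \<union> ?TF"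
  proof (cases b; cases c)
    assume "b" "c"
    then have "v = v'"
      using xy bv cv by (simp add: bubble_pass_True_Cons)
    then have "p \<in> ?TT"
      using p x bv cv \<open>b\<close> \<open>c\<close> by auto
    then show ?thesis by blast
  next
    assume "b" "\<not> c"
    with y cv have v': "v' \<in> bool_words s m"
      by simp
    from xy[symmetric] bv cv \<open>b\<close> \<open>\<not> c\<close> have "v = butlast (False # bubble_pass v')"
      using bubble_pass_False_Cons_eq_True_Cons_iff[OF True_in_set_if_mem_bool_words[OF v' assms]]
      by simp
    with p v' bv cv \<open>b\<close> \<open>\<not> c\<close> have "p \<in> ?TF"
      by (intro image_eqI[where x = v']) simp_all
    then show ?thesis by blast
  next
    assume "\<not> b" "c"
    with x bv have v: "v \<in> bool_words s m"
      by simp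
    from xy bv cv \<open>\<not> b\<close> \<open>c\<close> have "v' = butlast (False # bubble_pass v)"
      using bubble_pass_False_Cons_eq_True_Cons_iff[OF True_in_set_if_mem_bool_words[OF v assms]]
      by simp
    with p v bv cv \<open>\<not> b\<close> \<open>c\<close> have "p \<in> ?FT"
      by (intro image_eqI[where x = v]) simp_all
    then show ?thesis by blast
  next
    assume "\<not> b" "\<not> c"
    then have "p \<in> ?FF"
      using p x y xy bv cv by (auto simp: kernel_pairs_def bubble_pass_False_Cons)
    then show ?thesis by blast
  qed
qed

lemma kernel_pairs_bool_words_Suc:
  assumes "0 < m"
  shows "kernel_pairs (bool_words (Suc s) m) bubble_pass =
      map_prod (Cons False) (Cons False) ` kernel_pairs (bool_words s m) bubble_pass
    \<union> (\<lambda>v. (True # v, True # v)) ` bool_words (Suc s) (m - 1)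
    \<union> (\<lambda>v. (False # v, True # butlast (False # bubble_pass v))) ` bool_words s m
    \<union> (\<lambda>v. (True # butlast (False # bubble_pass v), False # v)) ` bool_words s m"
  (is "?K = _")
proof (rule equalityI[OF kernel_pairs_bool_words_Suc_subset[OF assms]], rule subsetI)
  have partner: "bubble_pass (False # v) = bubble_pass (True # butlast (False # bubble_pass v))"
    and False_Cons: "False # v \<in> bool_words (Suc s) m"
    and True_Cons: "True # butlast (False # bubble_pass v) \<in> bool_words (Suc s) m"
    if "v \<in> bool_words s m" for v
  proof -
    show partner: "bubble_pass (False # v) = bubble_pass (True # butlast (False # bubble_pass v))"
      using bubble_pass_False_Cons_eq_True_Cons_iff[OF True_in_set_if_mem_bool_words[OF that assms]]
      by blast
    show "False # v \<in> bool_words (Suc s) m"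
      using that by simp
    then show "True # butlast (False # bubble_pass v) \<in> bool_words (Suc s) m"
      using bubble_pass_eq_imp_mem_bool_words_iff[OF partner] by blast
  qed
  fix p assume "p \<in> map_prod (Cons False) (Cons False) ` kernel_pairs (bool_words s m) bubble_pass
    \<union> (\<lambda>v. (True # v, True # v)) ` bool_words (Suc s) (m - 1)
    \<union> (\<lambda>v. (False # v, True # butlast (False # bubble_pass v))) ` bool_words s m
    \<union> (\<lambda>v. (True # butlast (False # bubble_pass v), False # v)) ` bool_words s m"
  then show "p \<in> ?K"
  proof (elim UnE imageE)
    fix q assume "q \<in> kernel_pairs (bool_words s m) bubble_pass"
      and "p = map_prod (Cons False) (Cons False) q"
    then show ?thesis
      by (auto simp: kernel_pairs_def bubble_pass_False_Cons)
  next
    fix v assume "v \<in> bool_words (Suc s) (m - 1)" "p = (True # v, True # v)"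
    then show ?thesis
      using assms by (simp add: kernel_pairs_def)
  next
    fix v assume "v \<in> bool_words s m" "p = (False # v, True # butlast (False # bubble_pass v))"
    then show ?thesis
      using kernel_pairsI[OF False_Cons True_Cons partner] by simp
  next
    fix v assume "v \<in> bool_words s m" "p = (True # butlast (False # bubble_pass v), False # v)"
    then show ?thesis
      using kernel_pairsI[OF True_Cons False_Cons partner[symmetric]] by simp
  qed
qed

lemma card_kernel_pairs_bool_words_Suc:
  assumes "0 < m"
  shows "card (kernel_pairs (bool_words (Suc s) m) bubble_pass) =
    card (kernel_pairs (bool_words s m) bubble_pass) + card (bool_words (Suc s) (m - 1))
      + card (bool_words s m) + card (bool_words s m)"
  unfolding kernel_pairs_bool_words_Suc[OF assms]
  by (subst card_Un_disjoint card_image;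
      auto simp: inj_on_def finite_bool_words finite_kernel_pairs)+

lemma card_kernel_pairs_bool_words:
  assumes "0 < m"
  shows "real (card (kernel_pairs (bool_words s m) bubble_pass)) =
    (2 * real s / (real m + 1) + 1) * real (card (bool_words s m))"
proof (induction s)
  case 0
  have "kernel_pairs (bool_words 0 m) bubble_pass = {(replicate m True, replicate m True)}"
    by (auto simp: kernel_pairs_def bool_words_def permutations_of_multiset_replicate_mset)
  then show ?case
    by (simp add: bool_words_def permutations_of_multiset_replicate_mset)
next
  case (Suc s)
  let ?n = "real s + 1 + real m"
  define N where "N = real (card (bool_words (Suc s) m))"
  have "real (Suc s * card (bool_words (Suc s) m)) = real ((Suc s + m) * card (bool_words s m))"
    by (simp only: card_bool_words_Suc_False)
  then have c: "real (card (bool_words s m)) = (real s + 1) * N / ?n"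
    unfolding N_def by (simp add: field_simps)
  have "real (m * card (bool_words (Suc s) m)) =
      real ((Suc s + m) * card (bool_words (Suc s) (m - 1)))"
    using card_bool_words_Suc_True[where s = "Suc s" and m = "m - 1"] assms by simp
  then have d: "real (card (bool_words (Suc s) (m - 1))) = real m * N / ?n"
    unfolding N_def by (simp add: field_simps)
  have "real (card (kernel_pairs (bool_words (Suc s) m) bubble_pass)) =
      (2 * real s / (real m + 1) + 1) * ((real s + 1) * N / ?n) + real m * N / ?n
        + 2 * ((real s + 1) * N / ?n)"
    using Suc card_kernel_pairs_bool_words_Suc[OF assms, of s] c d by simp
  also have "\<dots> = (2 * real (Suc s) / (real m + 1) + 1) * N"
    by (simp add: divide_simps) algebra
  finally show ?case
    unfolding N_def .
qed

lemma fdeg_bool_words: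
  assumes "0 < m"
  shows "fdeg (bool_words s m) (bool_words s m) bubble_pass = 2 * real s / (real m + 1) + 1"
proof -
  have "bool_words s m \<noteq> {}"
    using card_bool_words_pos[of s m] by auto
  then show ?thesis
    using card_kernel_pairs_bool_words[OF assms, of s]
    by (simp add: fdeg_eq_card_kernel_pairs finite_bool_words bubble_pass_image_bool_words)
qed

section \<open>The product formula\<close>

lemma fdeg_words_single: "fdeg (words [s]) (words [s]) bubble_pass = 1"
proof -
  have words: "words [s] = {replicate s 1}"
    by (simp add: words_eq_permutations_of_multiset permutations_of_multiset_replicate_mset)
  then have "bubble_pass (replicate s (1::nat)) = replicate s 1"
    using bubble_pass_image_words[of "[s]"] by simp
  then show ?thesis
    unfolding words by (rule fdeg_singleton)
qed

lemma fdeg_bubble_pass_words: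
  assumes "\<forall>x\<in>set a. 0 < x"
  shows "fdeg (words a) (words a) bubble_pass =
    (\<Prod>i<length a - 1. 2 * real (a ! i) / (real (sum_list (drop (Suc i) a)) + 1) + 1)"
  using assms
proof (induction a)
  case Nil
  have "words [] = {[]}"
    by (simp add: words_eq_permutations_of_multiset)
  then show ?case
    by (simp add: fdeg_singleton)
next
  case (Cons s a)
  show ?case
  proof (cases "a = []")
    case True
    then show ?thesis
      by (simp add: fdeg_words_single)
  next
    case False
    then obtain x where "x \<in> set a"
      by fastforce
    then have "0 < sum_list a"
      using Cons.prems member_le_sum_list[of x a] by auto
    moreover obtain n where "length a = Suc n"
      using False by (cases a) auto
    ultimately show ?thesis
      using Cons by (simp add: fdeg_words_Cons fdeg_bool_words prod.lessThan_Suc_shift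
          del: prod.lessThan_Suc)
  qed
qed

lemma sum_list_drop_eq_sum_nth: "sum_list (drop j a) = (\<Sum>k=j..<length a. a ! k)"
proof (induction a arbitrary: j)
  case (Cons x a)
  then show ?case
    by (cases j) (simp_all add: sum_list_sum_nth atLeast0LessThan sum.shift_bounds_Suc_ivl
        del: sum.op_ivl_Suc)
qed simp

lemma sum_nth_pred_eq_sum_list_drop: "(\<Sum>k=j+1..length a. a ! (k - 1)) = sum_list (drop j a)"
  unfolding sum_list_drop_eq_sum_nth
  by (metis (mono_tags, lifting) Suc_eq_plus1 atLeastLessThanSuc_atLeastAtMost diff_Suc_1 sum.cong
      sum.shift_bounds_Suc_ivl)

theorem mainTheorem9:
  fixes a :: "nat list"
  assumes "length a \<ge> 2"
    and "\<forall>i<length a. a ! i > 0"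
  shows "fdeg (words a) (words a) bubble =
    (\<Prod>j=1..length a - 1.
       2 * real (a ! (j - 1)) / (real (\<Sum>k=j+1..length a. a ! (k - 1)) + 1) + 1)"
proof -
  have "bubble = bubble_pass"
    using bubble_eq_bubble_pass by blast
  moreover have "\<forall>x\<in>set a. 0 < x"
    using assms(2) by (simp add: all_set_conv_all_nth)
  ultimately show ?thesis
    unfolding sum_nth_pred_eq_sum_list_drop
    by (simp add: fdeg_bubble_pass_words prod.atLeast1_atMost_eq)
qed

end
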